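(* Let $X(t)$ satisfy (A1)–(A2), let $\mathbf v:\mathcal S_n\to\mathbb R^d$, and let $F^{\mathbf v}_k(t,\mathbf x)=\mathbb P\{X(t)=k,\ \mathbf L^{\mathbf v}(t)\le\mathbf x\}$. Then for every $k\in\mathcal S_n$ and every $\mathbf x\in\mathbb R^d\setminus\partial\mathbb R_+^d$, \[ \lim_{t\to0^+}F^{\mathbf v}_k(t,\mathbf x)=\mathbb 1_{\mathbb R_+^d}(\mathbf x)\,\mathbb P\{X(0)=k\}=F^{\mathbf v}_k(0,\mathbf x). \]
   Context: $\mathbb R_+^d=[0,\infty)^d$ and $\partial\mathbb R_+^d$ is its topological boundary in $\mathbb R^d$. (A1): $\{X(t)\}_{t\ge0}$ is a regular jump Markov process on $(\Omega,\mathcal F,\mathbb P)$ with values in $\mathcal S_n=\{1,\dots,n\}$, right-continuous trajectories, transition rates $q_{ij}(t)$. (A2): $Q(t)=(q_{ij}(t))$ is conservative ($q_i(t):=-q_{ii}(t)=\sum_{j\ne i}q_{ij}(t)$), continuous and bounded on $[0,\infty)$, and for each $i$ either $q_i\equiv0$ or $q_i>0$ everywhere with $\int_0^\infty q_i=\infty$. $\mathbf L^{\mathbf v}(t)=\int_0^t\mathbf v(X(s))\,ds$; comparisons componentwise. *)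

theory Defs
  imports "HOL-Probability.Probability"
begin

definition states :: "nat \<Rightarrow> nat set" where
  "states n = {1..n}"

definition jump_times :: "(real \<Rightarrow> nat) \<Rightarrow> real \<Rightarrow> real set" where
  "jump_times f T = {s \<in> {0<..T}. \<forall>e>0. \<exists>u\<in>{s-e<..<s}. f u \<noteq> f s}"

definition regular_jump_path :: "(real \<Rightarrow> nat) \<Rightarrow> bool" where
  "regular_jump_path f \<longleftrightarrow>
     (\<forall>t\<ge>0. \<exists>e>0. \<forall>s\<in>{t..<t+e}. f s = f t) \<and> (\<forall>T\<ge>0. finite (jump_times f T))"

text \<open>(A1): X is a regular jump Markov process on the probability space M with values
  in S_n, right-continuous trajectories, and transition rates q t i j, i.e. there is a
  transition function P s t i j (Markov property: conditional on the past up to time s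
  and on X s = i, the probability that X t = j is P s t i j) with
  q t i j = lim_{h -> 0+} (P t (t+h) i j - delta_ij) / h.\<close>
definition regular_jump_markov ::
  "'w measure \<Rightarrow> (real \<Rightarrow> 'w \<Rightarrow> nat) \<Rightarrow> nat \<Rightarrow> (real \<Rightarrow> nat \<Rightarrow> nat \<Rightarrow> real) \<Rightarrow> bool" where
  "regular_jump_markov M X n q \<longleftrightarrow>
     prob_space M \<and>
     (\<forall>t\<ge>0. X t \<in> measurable M (count_space UNIV)) \<and>
     (\<forall>t\<ge>0. \<forall>\<omega>\<in>space M. X t \<omega> \<in> states n) \<and>
     (\<forall>\<omega>\<in>space M. regular_jump_path (\<lambda>t. X t \<omega>)) \<and>
     (\<exists>P :: real \<Rightarrow> real \<Rightarrow> nat \<Rightarrow> nat \<Rightarrow> real.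
        (\<forall>T a s t i j. finite T \<longrightarrow> T \<subseteq> {0..s} \<longrightarrow> 0 \<le> s \<longrightarrow> s \<le> t \<longrightarrow>
            measure M {\<omega>\<in>space M. (\<forall>u\<in>T. X u \<omega> = a u) \<and> X s \<omega> = i \<and> X t \<omega> = j}
            = measure M {\<omega>\<in>space M. (\<forall>u\<in>T. X u \<omega> = a u) \<and> X s \<omega> = i} * P s t i j) \<and>
        (\<forall>t\<ge>0. \<forall>i\<in>states n. \<forall>j\<in>states n.
            ((\<lambda>h. (P t (t + h) i j - (if i = j then 1 else 0)) / h) \<longlongrightarrow> q t i j)
              (at_right 0)))"

definition rates_A2 :: "nat \<Rightarrow> (real \<Rightarrow> nat \<Rightarrow> nat \<Rightarrow> real) \<Rightarrow> bool" where
  "rates_A2 n q \<longleftrightarrow>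
     (\<forall>t\<ge>0. \<forall>i\<in>states n. - q t i i = (\<Sum>j\<in>states n - {i}. q t i j)) \<and>
     (\<forall>i\<in>states n. \<forall>j\<in>states n. continuous_on {0..} (\<lambda>t. q t i j)) \<and>
     (\<exists>B. \<forall>t\<ge>0. \<forall>i\<in>states n. \<forall>j\<in>states n. \<bar>q t i j\<bar> \<le> B) \<and>
     (\<forall>i\<in>states n. (\<forall>t\<ge>0. - q t i i = 0) \<or>
        ((\<forall>t\<ge>0. - q t i i > 0) \<and>
         filterlim (\<lambda>T. integral {0..T} (\<lambda>t. - q t i i)) at_top at_top))"

definition occupation :: "(nat \<Rightarrow> real^'d) \<Rightarrow> (real \<Rightarrow> 'w \<Rightarrow> nat) \<Rightarrow> real \<Rightarrow> 'w \<Rightarrow> real^'d" where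
  "occupation v X t \<omega> = integral {0..t} (\<lambda>s. v (X s \<omega>))"

definition Fv :: "'w measure \<Rightarrow> (nat \<Rightarrow> real^'d) \<Rightarrow> (real \<Rightarrow> 'w \<Rightarrow> nat) \<Rightarrow> nat \<Rightarrow> real \<Rightarrow> real^'d \<Rightarrow> real" where
  "Fv M v X k t x = measure M {\<omega>\<in>space M. X t \<omega> = k \<and> (\<forall>i. occupation v X t \<omega> $ i \<le> x $ i)}"

definition nonneg_orthant :: "(real^'d) set" where
  "nonneg_orthant = {x. \<forall>i. 0 \<le> x $ i}"

end

theory Submission
  imports Defs
begin

text \<open>Since the states are finitely many, \<open>L\<^sup>v(t)\<close> has norm at most \<open>C t\<close> for a constant \<open>C\<close>
  independent of the trajectory. For \<open>x\<close> off the boundary of the orthant the event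
  \<open>L\<^sup>v(t) \<le> x\<close> is therefore, for all small \<open>t > 0\<close>, either sure (all \<open>x\<^sub>i > 0\<close>) or impossible
  (some \<open>x\<^sub>i < 0\<close>). What remains is the right continuity of \<open>P{X(t) = k}\<close> at \<open>0\<close>, which
  follows by dominated convergence from the right continuity of the trajectories.\<close>

lemma norm_occupation_le:
  fixes v :: "nat \<Rightarrow> real^'d"
  assumes "\<And>s. s \<in> {0..t} \<Longrightarrow> norm (v (X s \<omega>)) \<le> C" and "0 \<le> C" and "0 \<le> t"
  shows "norm (occupation v X t \<omega>) \<le> C * t"
proof (cases "(\<lambda>s. v (X s \<omega>)) integrable_on {0..t}")
  case True
  then have "((\<lambda>s. v (X s \<omega>)) has_integral occupation v X t \<omega>) (cbox 0 t)"
    unfolding occupation_def by (simp add: integrable_integral)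
  from has_integral_bound[OF \<open>0 \<le> C\<close> this] show ?thesis
    using assms by (auto simp: content_real)
next
  case False
  then show ?thesis
    unfolding occupation_def using assms by (simp add: not_integrable_integral)
qed

lemma abs_occupation_component_le:
  fixes v :: "nat \<Rightarrow> real^'d"
  assumes "finite S" and "\<And>s. s \<in> {0..t} \<Longrightarrow> X s \<omega> \<in> S" and "0 \<le> t"
  shows "\<bar>occupation v X t \<omega> $ i\<bar> \<le> (\<Sum>j\<in>S. norm (v j)) * t"
proof -
  have "norm (occupation v X t \<omega>) \<le> (\<Sum>j\<in>S. norm (v j)) * t"
    using assms by (intro norm_occupation_le member_le_sum sum_nonneg) auto
  then show ?thesis
    using component_le_norm_cart[of "occupation v X t \<omega>" i] by linarith
qed

lemma occupation_linear_bound: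
  fixes v :: "nat \<Rightarrow> real^'d"
  assumes "regular_jump_markov M X n q"
  obtains C where "\<And>t \<omega> i. 0 \<le> t \<Longrightarrow> \<omega> \<in> space M \<Longrightarrow> \<bar>occupation v X t \<omega> $ i\<bar> \<le> C * t"
proof
  fix t :: real and \<omega> i assume "0 \<le> t" "\<omega> \<in> space M"
  with assms show "\<bar>occupation v X t \<omega> $ i\<bar> \<le> (\<Sum>j\<in>states n. norm (v j)) * t"
    by (intro abs_occupation_component_le) (auto simp: regular_jump_markov_def states_def)
qed

lemma eventually_at_right_0_mult_less:
  fixes C a :: real
  assumes "0 < a"
  shows "\<forall>\<^sub>F t in at_right 0. 0 < t \<and> C * t < a"
proof -
  have "((\<lambda>t. C * t) \<longlongrightarrow> C * 0) (at_right 0)"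
    by (intro tendsto_intros)
  then have "\<forall>\<^sub>F t in at_right 0. C * t < a"
    using assms by (intro order_tendstoD(2)) auto
  then show ?thesis
    using eventually_at_right_less by (rule eventually_conj[rotated])
qed

lemma not_frontier_nonneg_orthant:
  fixes x :: "real^'d"
  assumes "x \<notin> frontier nonneg_orthant"
  obtains "\<forall>i. 0 < x $ i" | i where "x $ i < 0"
proof (cases "\<exists>i. x $ i < 0")
  case False
  then have nonneg: "\<forall>j. 0 \<le> x $ j" by (simp add: not_less)
  have "x $ i \<noteq> 0" for i
  proof
    assume xi: "x $ i = 0"
    have "x \<in> frontier nonneg_orthant"
      unfolding frontier_straddle
    proof (intro allI impI conjI)
      fix e :: real assume "e > 0"
      show "\<exists>y\<in>nonneg_orthant. dist x y < e"
        using nonneg \<open>e > 0\<close> by (intro bexI[of _ x]) (auto simp: nonneg_orthant_def)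
      have "axis i (e/2) = (e/2) *\<^sub>R (axis i 1 :: real^'d)"
        by (simp add: vec_eq_iff axis_def)
      then have "norm (axis i (e/2) :: real^'d) = e/2"
        using \<open>e > 0\<close> by simp
      moreover have "x - axis i (e/2) \<notin> nonneg_orthant"
        using xi \<open>e > 0\<close> by (auto simp: nonneg_orthant_def intro!: exI[of _ i])
      ultimately show "\<exists>y. y \<notin> nonneg_orthant \<and> dist x y < e"
        using \<open>e > 0\<close> by (intro exI[of _ "x - axis i (e/2)"]) (simp add: dist_norm)
    qed
    with assms show False by simp
  qed
  with nonneg show thesis
    using that(1) by (simp add: order_le_neq_trans)
qed (use that(2) in blast)

lemma (in finite_measure) tendsto_measure_at_right:
  fixes t\<^sub>0 :: real
  assumes sets: "\<And>t. t\<^sub>0 < t \<Longrightarrow> A t \<in> sets M" "B \<in> sets M"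
    and pointwise: "\<And>\<omega>. \<omega> \<in> space M \<Longrightarrow> \<forall>\<^sub>F t in at_right t\<^sub>0. (\<omega> \<in> A t \<longleftrightarrow> \<omega> \<in> B)"
  shows "((\<lambda>t. measure M (A t)) \<longlongrightarrow> measure M B) (at_right t\<^sub>0)"
  unfolding tendsto_at_iff_sequentially comp_def
proof (intro allI impI)
  fix T :: "nat \<Rightarrow> real"
  assume T: "\<forall>i. T i \<in> {t\<^sub>0<..} - {t\<^sub>0}" and "T \<longlonglongrightarrow> t\<^sub>0"
  then have T_at_right: "filterlim T (at_right t\<^sub>0) sequentially"
    by (auto simp: filterlim_at less_imp_neq[symmetric] intro: always_eventually)
  have "(\<lambda>i. integral\<^sup>L M (indicator (A (T i)) :: 'a \<Rightarrow> real)) \<longlonglongrightarrow> integral\<^sup>L M (indicator B)"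
  proof (rule integral_dominated_convergence[where w = "\<lambda>_. 1"])
    show "AE \<omega> in M. (\<lambda>i. indicator (A (T i)) \<omega> :: real) \<longlonglongrightarrow> indicator B \<omega>"
    proof (rule AE_I2)
      fix \<omega> assume "\<omega> \<in> space M"
      from filterlim_iff[THEN iffD1, OF T_at_right, rule_format, OF pointwise[OF this]]
      have "\<forall>\<^sub>F i in sequentially. indicator (A (T i)) \<omega> = (indicator B \<omega> :: real)"
        by eventually_elim (simp add: indicator_def)
      then show "(\<lambda>i. indicator (A (T i)) \<omega> :: real) \<longlonglongrightarrow> indicator B \<omega>"
        by (rule tendsto_eventually)
    qed
  qed (use sets T in \<open>auto simp: indicator_def\<close>)
  then show "(\<lambda>i. measure M (A (T i))) \<longlonglongrightarrow> measure M B"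
    using sets T by simp
qed

lemma tendsto_state_prob_at_right:
  assumes "regular_jump_markov M X n q" and "0 \<le> t\<^sub>0"
  shows "((\<lambda>t. measure M {\<omega>\<in>space M. X t \<omega> = k}) \<longlongrightarrow> measure M {\<omega>\<in>space M. X t\<^sub>0 \<omega> = k})
           (at_right t\<^sub>0)"
proof -
  have prob: "prob_space M" and meas: "\<And>t. 0 \<le> t \<Longrightarrow> X t \<in> measurable M (count_space UNIV)"
    and paths: "\<And>\<omega>. \<omega> \<in> space M \<Longrightarrow> regular_jump_path (\<lambda>t. X t \<omega>)"
    using assms(1) unfolding regular_jump_markov_def by auto
  interpret prob_space M by (rule prob)
  have sets: "{\<omega>\<in>space M. X t \<omega> = k} \<in> sets M" if "0 \<le> t" for t
    using measurable_sets[OF meas[OF that], of "{k}"] by (simp add: vimage_def Int_def conj_commute)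
  show ?thesis
  proof (rule tendsto_measure_at_right)
    fix \<omega> assume "\<omega> \<in> space M"
    then obtain e where "e > 0" and const: "\<And>s. s \<in> {t\<^sub>0..<t\<^sub>0+e} \<Longrightarrow> X s \<omega> = X t\<^sub>0 \<omega>"
      using paths \<open>0 \<le> t\<^sub>0\<close> unfolding regular_jump_path_def by blast
    have "\<forall>\<^sub>F t in at_right t\<^sub>0. t \<in> {t\<^sub>0..<t\<^sub>0+e}"
      using \<open>e > 0\<close> by (intro eventually_at_rightI[of t\<^sub>0 "t\<^sub>0+e"]) auto
    then show "\<forall>\<^sub>F t in at_right t\<^sub>0. (\<omega> \<in> {\<omega>\<in>space M. X t \<omega> = k}
                 \<longleftrightarrow> \<omega> \<in> {\<omega>\<in>space M. X t\<^sub>0 \<omega> = k})"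
    proof eventually_elim
      case (elim t)
      then have "X t \<omega> = X t\<^sub>0 \<omega>" by (rule const)
      then show ?case by simp
    qed
  qed (use sets assms(2) in force)+
qed

lemma Fv_zero:
  "Fv M v X k 0 x = indicator nonneg_orthant x * measure M {\<omega>\<in>space M. X 0 \<omega> = k}"
proof -
  have "occupation v X 0 \<omega> = 0" for \<omega>
    by (simp add: occupation_def)
  then have "{\<omega>\<in>space M. X 0 \<omega> = k \<and> (\<forall>i. occupation v X 0 \<omega> $ i \<le> x $ i)}
      = (if x \<in> nonneg_orthant then {\<omega>\<in>space M. X 0 \<omega> = k} else {})"
    by (auto simp: nonneg_orthant_def)
  then show ?thesis
    by (simp add: Fv_def)
qed

lemma Fv_eventually_state_prob:
  assumes "regular_jump_markov M X n q" and "\<forall>i. 0 < x $ i"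
  shows "\<forall>\<^sub>F t in at_right 0. Fv M v X k t x = measure M {\<omega>\<in>space M. X t \<omega> = k}"
proof -
  obtain C where C: "\<And>t \<omega> i. 0 \<le> t \<Longrightarrow> \<omega> \<in> space M \<Longrightarrow> \<bar>occupation v X t \<omega> $ i\<bar> \<le> C * t"
    using occupation_linear_bound[OF assms(1)] by blast
  have "\<forall>\<^sub>F t in at_right 0. \<forall>i. 0 < t \<and> C * t < x $ i"
    using assms(2) by (intro eventually_all_finite eventually_at_right_0_mult_less) auto
  then show ?thesis
  proof eventually_elim
    case (elim t)
    have "occupation v X t \<omega> $ i \<le> x $ i" if "\<omega> \<in> space M" for \<omega> i
      using abs_le_D1[OF C[OF _ that, of t i]] elim by (meson less_imp_le order_trans)
    then have "{\<omega>\<in>space M. X t \<omega> = k \<and> (\<forall>i. occupation v X t \<omega> $ i \<le> x $ i)}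
        = {\<omega>\<in>space M. X t \<omega> = k}"
      by blast
    then show ?case
      by (simp add: Fv_def)
  qed
qed

lemma Fv_eventually_zero:
  assumes "regular_jump_markov M X n q" and "x $ i < 0"
  shows "\<forall>\<^sub>F t in at_right 0. Fv M v X k t x = 0"
proof -
  obtain C where C: "\<And>t \<omega> i. 0 \<le> t \<Longrightarrow> \<omega> \<in> space M \<Longrightarrow> \<bar>occupation v X t \<omega> $ i\<bar> \<le> C * t"
    using occupation_linear_bound[OF assms(1)] by blast
  have "\<forall>\<^sub>F t in at_right 0. 0 < t \<and> C * t < - x $ i"
    using assms(2) by (intro eventually_at_right_0_mult_less) auto
  then show ?thesis
  proof eventually_elim
    case (elim t)
    have "\<not> occupation v X t \<omega> $ i \<le> x $ i" if "\<omega> \<in> space M" for \<omega>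
      using abs_le_D2[OF C[OF _ that, of t i]] elim by linarith
    then have empty: "{\<omega>\<in>space M. X t \<omega> = k \<and> (\<forall>i. occupation v X t \<omega> $ i \<le> x $ i)} = {}"
      by blast
    show ?case
      unfolding Fv_def empty by simp
  qed
qed

theorem proposition2:
  fixes M :: "'w measure" and X :: "real \<Rightarrow> 'w \<Rightarrow> nat" and n :: nat
    and q :: "real \<Rightarrow> nat \<Rightarrow> nat \<Rightarrow> real" and v :: "nat \<Rightarrow> real^'d"
    and k :: nat and x :: "real^'d"
  assumes "regular_jump_markov M X n q"
    and "rates_A2 n q"
    and "k \<in> states n"
    and "x \<notin> frontier nonneg_orthant"
  shows "((\<lambda>t. Fv M v X k t x) \<longlongrightarrow>
            indicator nonneg_orthant x * measure M {\<omega>\<in>space M. X 0 \<omega> = k}) (at_right 0)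
         \<and> indicator nonneg_orthant x * measure M {\<omega>\<in>space M. X 0 \<omega> = k} = Fv M v X k 0 x"
proof
  from assms(4) show "((\<lambda>t. Fv M v X k t x) \<longlongrightarrow>
      indicator nonneg_orthant x * measure M {\<omega>\<in>space M. X 0 \<omega> = k}) (at_right 0)"
  proof (cases rule: not_frontier_nonneg_orthant)
    case 1
    then have "indicator nonneg_orthant x = (1::real)"
      by (auto simp: nonneg_orthant_def less_imp_le)
    with tendsto_state_prob_at_right[OF assms(1), of 0 k] show ?thesis
      by (simp add: tendsto_cong[OF Fv_eventually_state_prob[OF assms(1) 1]])
  next
    case (2 i)
    then have "x \<notin> nonneg_orthant"
      by (auto simp: nonneg_orthant_def not_le)
    then show ?thesis
      by (simp add: tendsto_cong[OF Fv_eventually_zero[OF assms(1) 2]])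
  qed
qed (rule Fv_zero[symmetric])

end
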